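(* Let $X$ be a Köthe space over a $\sigma$-finite measure space $(S,\mu)$ such that $[X,X^*]_{1/2}=L_2(\mu)$, with associated differential $\Omega_X$ at $1/2$. For $0<\theta<1$ let $X_\theta=[X,L_\infty]_\theta$, so that $X_\theta^*=[X^*,L_1]_\theta$. Then $[X_\theta,X_\theta^*]_{1/2}=L_2(\mu)$ and the differential $\Omega_{X_\theta}$ generated by the pair $(X_\theta,X_\theta^* )$ at $1/2$ satisfies, up to bounded equivalence, $$\Omega_{X_\theta}=(1-\theta)\Omega_X+\theta\,\mathsf{KP}_2.$$
   Context: Köthe space: $L_\infty$-submodule of $L_0(\mu)$ complete under a lattice norm. $X^*$ is the Köthe dual $\{g:\ fg\in L_1\ \forall f\in X\}$. Pairs are assumed regular (intersection dense in both), so that $[A,B]_\theta=A^{1-\theta}B^\theta$ and the differential at $\theta$ is $x\mapsto x\log(|b(x)|/|a(x)|)$ for almost optimal factorizations $|x|=|a(x)|^{1-\theta}|b(x)|^\theta$. $\mathsf{KP}_2$ is the Kalton–Peck centralizer on $L_2(\mu)$, i.e. the differential of $(L_\infty,L_1)$ at $1/2$: $\mathsf{KP}_2(x)=2x\log(|x|/\|x\|_2)$. Bounded equivalence: the difference is a bounded homogeneous map into the space. *)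

theory Defs
  imports "HOL-Analysis.Analysis"
begin

text \<open>A space is encoded by its
(lattice) norm N :: ('a => real) => ennreal; the space itself is the set of measurable
functions of finite norm.  Functions are not quotiented by a.e. equality; all norms
below are invariant under a.e. equality.\<close>

definition kspace :: "'a measure \<Rightarrow> (('a \<Rightarrow> real) \<Rightarrow> ennreal) \<Rightarrow> ('a \<Rightarrow> real) set" where
  "kspace M N = {f \<in> borel_measurable M. N f < \<infinity>}"

definition koethe :: "'a measure \<Rightarrow> (('a \<Rightarrow> real) \<Rightarrow> ennreal) \<Rightarrow> bool" where
  "koethe M N \<longleftrightarrow>
     \<comment> \<open>lattice (ideal) property, which also gives a.e.-invariance and the L_infinity-module structure\<close>
     (\<forall>f g. f \<in> borel_measurable M \<longrightarrow> g \<in> borel_measurable M \<longrightarrow>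
        (AE s in M. \<bar>f s\<bar> \<le> \<bar>g s\<bar>) \<longrightarrow> N f \<le> N g)
     \<comment> \<open>norm axioms\<close>
   \<and> (\<forall>f c. f \<in> borel_measurable M \<longrightarrow> N (\<lambda>s. c * f s) = ennreal \<bar>c\<bar> * N f)
   \<and> (\<forall>f g. f \<in> borel_measurable M \<longrightarrow> g \<in> borel_measurable M \<longrightarrow>
        N (\<lambda>s. f s + g s) \<le> N f + N g)
   \<and> (\<forall>f. f \<in> borel_measurable M \<longrightarrow> N f = 0 \<longrightarrow> (AE s in M. f s = 0))
     \<comment> \<open>completeness\<close>
   \<and> (\<forall>F. (\<forall>n. F n \<in> kspace M N) \<longrightarrow>
        (\<forall>e>0. \<exists>n0. \<forall>m\<ge>n0. \<forall>n\<ge>n0. N (\<lambda>s. F m s - F n s) < ennreal e) \<longrightarrow>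
        (\<exists>f\<in>kspace M N. (\<lambda>n. N (\<lambda>s. F n s - f s)) \<longlonglongrightarrow> 0))"

definition kdual :: "'a measure \<Rightarrow> (('a \<Rightarrow> real) \<Rightarrow> ennreal) \<Rightarrow> ('a \<Rightarrow> real) \<Rightarrow> ennreal" where
  "kdual M N g = (if g \<in> borel_measurable M then
     (SUP f\<in>{f \<in> borel_measurable M. N f \<le> 1}. \<integral>\<^sup>+ s. ennreal \<bar>f s * g s\<bar> \<partial>M) else \<infinity>)"

definition L1norm :: "'a measure \<Rightarrow> ('a \<Rightarrow> real) \<Rightarrow> ennreal" where
  "L1norm M f = (if f \<in> borel_measurable M then \<integral>\<^sup>+ s. ennreal \<bar>f s\<bar> \<partial>M else \<infinity>)"

definition L2norm :: "'a measure \<Rightarrow> ('a \<Rightarrow> real) \<Rightarrow> ennreal" where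
  "L2norm M f = (if f \<in> borel_measurable M then
     (let I = \<integral>\<^sup>+ s. ennreal ((f s)\<^sup>2) \<partial>M in
      if I = \<infinity> then \<infinity> else ennreal (sqrt (enn2real I))) else \<infinity>)"

definition Linfnorm :: "'a measure \<Rightarrow> ('a \<Rightarrow> real) \<Rightarrow> ennreal" where
  "Linfnorm M f = (if f \<in> borel_measurable M then
     Inf {ennreal c | c. 0 \<le> c \<and> (AE s in M. \<bar>f s\<bar> \<le> c)} else \<infinity>)"

text \<open>Calderon product A^(1-theta) B^theta (= complex interpolation space [A,B]_theta
for regular pairs, as assumed in the paper).\<close>
definition calderon :: "'a measure \<Rightarrow> real \<Rightarrow> (('a \<Rightarrow> real) \<Rightarrow> ennreal) \<Rightarrow>
    (('a \<Rightarrow> real) \<Rightarrow> ennreal) \<Rightarrow> ('a \<Rightarrow> real) \<Rightarrow> ennreal" where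
  "calderon M \<theta> NA NB x = (if x \<in> borel_measurable M then
     Inf {ennreal l | l a b. 0 \<le> l \<and> a \<in> borel_measurable M \<and> b \<in> borel_measurable M \<and>
            NA a \<le> 1 \<and> NB b \<le> 1 \<and>
            (AE s in M. \<bar>x s\<bar> \<le> l * \<bar>a s\<bar> powr (1 - \<theta>) * \<bar>b s\<bar> powr \<theta>)} else \<infinity>)"

definition almost_opt_fact :: "'a measure \<Rightarrow> real \<Rightarrow> (('a \<Rightarrow> real) \<Rightarrow> ennreal) \<Rightarrow>
    (('a \<Rightarrow> real) \<Rightarrow> ennreal) \<Rightarrow> real \<Rightarrow> (('a \<Rightarrow> real) \<Rightarrow> 'a \<Rightarrow> real) \<Rightarrow>
    (('a \<Rightarrow> real) \<Rightarrow> 'a \<Rightarrow> real) \<Rightarrow> bool" where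
  "almost_opt_fact M \<theta> NA NB C a b \<longleftrightarrow>
     (\<forall>x\<in>kspace M (calderon M \<theta> NA NB).
        a x \<in> borel_measurable M \<and> b x \<in> borel_measurable M \<and>
        (AE s in M. \<bar>x s\<bar> = \<bar>a x s\<bar> powr (1 - \<theta>) * \<bar>b x s\<bar> powr \<theta>) \<and>
        NA (a x) \<le> ennreal C * calderon M \<theta> NA NB x \<and>
        NB (b x) \<le> ennreal C * calderon M \<theta> NA NB x)"

definition differential :: "(('a \<Rightarrow> real) \<Rightarrow> 'a \<Rightarrow> real) \<Rightarrow> (('a \<Rightarrow> real) \<Rightarrow> 'a \<Rightarrow> real) \<Rightarrow>
    ('a \<Rightarrow> real) \<Rightarrow> 'a \<Rightarrow> real" where
  "differential a b x = (\<lambda>s. if x s = 0 then 0 else x s * ln (\<bar>b x s\<bar> / \<bar>a x s\<bar>))"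

definition KP2 :: "'a measure \<Rightarrow> ('a \<Rightarrow> real) \<Rightarrow> 'a \<Rightarrow> real" where
  "KP2 M x = (\<lambda>s. if x s = 0 then 0 else 2 * x s * ln (\<bar>x s\<bar> / enn2real (L2norm M x)))"

end

theory Submission
  imports Defs
begin

(* If |x| <= l |a|^(1/2) |b|^(1/2) with a in X and b in X*, then alpha = |a|^(1-theta) lies in
   X_theta, Young's inequality shows that beta = |b|^(1-theta) |x|^(2 theta) pairs boundedly with
   X_theta, i.e. lies in the Koethe dual of X_theta, and |x| <= C alpha^(1/2) beta^(1/2).
   Conversely every element of [A, A*]_(1/2) lies in L_2, since |x|^2 <= l^2 |a b|.

   For the differentials, let (a, b) and (a', b') be almost optimal factorizations of x for
   (X, X* ) and (X_theta, X_theta* ), and n = ||x||_2.  Pointwise the difference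
   D = Omega_(X_theta) x - (1 - theta) Omega_X x - theta KP_2 x equals x ln (p / q) with
   p = |b'| |a|^(1-theta) n^theta and q = |a'| |b|^(1-theta) |x|^(2 theta) n^(-theta),
   and p q = x^4; hence D^2 <= 16 (p + q).  Both p and q have integral O(n^2) by the two duality
   pairings, because the factors have norms O(n): an inclusion of L_2 into a Calderon space is
   automatically bounded, as a sequence of counterexamples with geometrically decaying L_2
   norms glues into a single L_2 function of infinite Calderon norm. *)

lemma Youngs_inequality_scaled:
  fixes P Q A m :: real
  assumes "0 \<le> P" "0 \<le> Q" "0 < A" "0 < m" "0 < \<theta>" "\<theta> < 1"
  shows "P powr (1-\<theta>) * Q powr \<theta> \<le> A powr (1-\<theta>) * m powr \<theta> * ((1-\<theta>) * (P/A) + \<theta> * (Q/m))"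
proof -
  have "(P/A) powr (1-\<theta>) * (Q/m) powr \<theta> \<le> (1-\<theta>) * (P/A) + \<theta> * (Q/m)"
    using assms Youngs_inequality_0[of "1-\<theta>" \<theta> "P/A" "Q/m"]
    by (cases "P = 0 \<or> Q = 0") auto
  moreover have "P powr (1-\<theta>) * Q powr \<theta> = A powr (1-\<theta>) * m powr \<theta> * ((P/A) powr (1-\<theta>) * (Q/m) powr \<theta>)"
    using assms by (simp add: powr_divide field_simps)
  moreover have "0 \<le> A powr (1-\<theta>) * m powr \<theta>" by simp
  ultimately show ?thesis by (metis mult_left_mono)
qed

lemma sq_le_exp_plus_exp_minus:
  fixes t :: real
  shows "t\<^sup>2 \<le> 4 * (exp t + exp (-t))"
proof -
  have "1 + \<bar>t\<bar>/2 \<le> exp (\<bar>t\<bar>/2)" by (rule exp_ge_add_one_self)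
  then have "(1 + \<bar>t\<bar>/2)\<^sup>2 \<le> (exp (\<bar>t\<bar>/2))\<^sup>2" by (intro power_mono) auto
  also have "\<dots> = exp \<bar>t\<bar>" by (simp add: power2_eq_square flip: exp_add)
  also have "\<dots> \<le> exp t + exp (-t)" by (cases "t \<ge> 0") auto
  finally have "(1 + \<bar>t\<bar>/2)\<^sup>2 \<le> exp t + exp (-t)" .
  moreover have "t\<^sup>2 \<le> 4 * (1 + \<bar>t\<bar>/2)\<^sup>2" by (simp add: power2_eq_square algebra_simps)
  ultimately show ?thesis by (meson order_trans mult_left_mono zero_le_numeral)
qed

lemma sq_mult_ln_quotient_le:
  fixes p q X :: real
  assumes "0 < p" "0 < q" "p * q = X ^ 4"
  shows "(X * ln (p / q))\<^sup>2 \<le> 16 * (p + q)"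
proof -
  define w where "w = ln (p / q)"
  have "X \<noteq> 0" using assms by auto
  have "ln p + ln q = 2 * ln (X\<^sup>2)"
    using assms by (simp add: ln_realpow flip: ln_mult_pos)
  then have "ln p = ln (X\<^sup>2) + w/2" "ln q = ln (X\<^sup>2) + -(w/2)"
    using assms by (simp_all add: w_def ln_div field_simps)
  then have pq: "p = X\<^sup>2 * exp (w/2)" "q = X\<^sup>2 * exp (-(w/2))"
    using assms \<open>X \<noteq> 0\<close> by (metis exp_add exp_ln zero_less_power2)+
  have "(X * w)\<^sup>2 = X\<^sup>2 * (4 * (w/2)\<^sup>2)" by (simp add: power2_eq_square)
  also have "\<dots> \<le> X\<^sup>2 * (4 * (4 * (exp (w/2) + exp (-(w/2)))))"
    by (intro mult_left_mono sq_le_exp_plus_exp_minus) auto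
  also have "\<dots> = 16 * (p + q)" by (simp add: pq algebra_simps)
  finally show ?thesis by (simp add: w_def)
qed

lemma sq_le_of_abs_le_half_factorization:
  fixes X l p q :: real
  assumes "0 \<le> l" "\<bar>X\<bar> \<le> l * \<bar>p\<bar> powr (1 - 1/2) * \<bar>q\<bar> powr (1/2)"
  shows "X\<^sup>2 \<le> l\<^sup>2 * \<bar>p * q\<bar>"
proof -
  have "\<bar>X\<bar>\<^sup>2 \<le> (l * sqrt \<bar>p\<bar> * sqrt \<bar>q\<bar>)\<^sup>2"
    using assms by (intro power_mono) (auto simp: powr_half_sqrt)
  then show ?thesis by (simp add: power_mult_distrib abs_mult)
qed

lemma Young_bound_of_factorization:
  fixes F U V B X l A m :: real
  assumes "0 \<le> l" "\<bar>F\<bar> \<le> l * \<bar>U\<bar> powr (1-\<theta>) * \<bar>V\<bar> powr \<theta>" "\<bar>V\<bar> < 2"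
    "0 < A" "0 < m" "0 < \<theta>" "\<theta> < 1"
  shows "\<bar>F\<bar> * (\<bar>B\<bar> powr (1-\<theta>) * \<bar>X\<bar> powr (2*\<theta>))
     \<le> (2 * l * A powr (1-\<theta>) * m powr \<theta> * (1-\<theta>) / A) * \<bar>U * B\<bar>
      + (2 * l * A powr (1-\<theta>) * m powr \<theta> * \<theta> / m) * X\<^sup>2"
proof -
  have "\<bar>V\<bar> powr \<theta> \<le> 2 powr 1"
    using assms by (intro order_trans[OF powr_mono2 powr_mono]) auto
  then have V: "\<bar>V\<bar> powr \<theta> \<le> 2" by simp
  have X: "\<bar>X\<bar> powr (2*\<theta>) = (X\<^sup>2) powr \<theta>"
    by (cases "X = 0") (auto simp: powr_powr[symmetric] powr_numeral)
  have "\<bar>F\<bar> * (\<bar>B\<bar> powr (1-\<theta>) * \<bar>X\<bar> powr (2*\<theta>))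
      \<le> (l * \<bar>U\<bar> powr (1-\<theta>) * 2) * (\<bar>B\<bar> powr (1-\<theta>) * \<bar>X\<bar> powr (2*\<theta>))"
    using assms V by (intro mult_right_mono order_trans[OF assms(2)] mult_left_mono) auto
  also have "\<dots> = 2 * l * (\<bar>U * B\<bar> powr (1-\<theta>) * (X\<^sup>2) powr \<theta>)"
    unfolding X by (simp add: abs_mult powr_mult mult_ac)
  also have "\<dots> \<le> 2 * l * (A powr (1-\<theta>) * m powr \<theta> * ((1-\<theta>) * (\<bar>U * B\<bar>/A) + \<theta> * (X\<^sup>2/m)))"
    using assms by (intro mult_left_mono Youngs_inequality_scaled) auto
  also have "\<dots> = (2 * l * A powr (1-\<theta>) * m powr \<theta> * (1-\<theta>) / A) * \<bar>U * B\<bar>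
      + (2 * l * A powr (1-\<theta>) * m powr \<theta> * \<theta> / m) * X\<^sup>2"
    by (simp add: field_simps)
  finally show ?thesis .
qed

lemma abs_le_interpolated_half_factorization:
  fixes X l p q K :: real
  assumes "0 \<le> l" "0 < K" "0 < \<theta>" "\<theta> < 1"
    and fac: "\<bar>X\<bar> \<le> l * \<bar>p\<bar> powr (1 - 1/2) * \<bar>q\<bar> powr (1/2)"
  shows "\<bar>X\<bar> \<le> (l powr (1-\<theta>) * sqrt K) * \<bar>\<bar>p\<bar> powr (1-\<theta>)\<bar> powr (1 - 1/2) *
     \<bar>\<bar>q\<bar> powr (1-\<theta>) * \<bar>X\<bar> powr (2*\<theta>) / K\<bar> powr (1/2)"
proof (cases "X = 0")
  case False
  then have l: "0 < l" and p: "p \<noteq> 0" and q: "q \<noteq> 0"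
    using assms(1) fac by (auto simp: less_le)
  have "ln \<bar>X\<bar> \<le> ln (l * \<bar>p\<bar> powr (1 - 1/2) * \<bar>q\<bar> powr (1/2))"
    using fac False by (subst ln_le_cancel_iff) auto
  also have "\<dots> = ln l + ln \<bar>p\<bar>/2 + ln \<bar>q\<bar>/2" using l p q by (simp add: ln_mult ln_powr)
  finally have "(1-\<theta>) * ln \<bar>X\<bar> \<le> (1-\<theta>) * (ln l + ln \<bar>p\<bar>/2 + ln \<bar>q\<bar>/2)"
    using assms(4) by (intro mult_left_mono) auto
  then have "ln \<bar>X\<bar> \<le> (1-\<theta>) * ln l + ln K / 2 + (1-\<theta>) * ln \<bar>p\<bar> / 2
      + ((1-\<theta>) * ln \<bar>q\<bar> + 2*\<theta>*ln \<bar>X\<bar> - ln K)/2"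
    by (simp add: algebra_simps add_divide_distrib diff_divide_distrib)
  also have "\<dots> = ln (l powr (1-\<theta>) * sqrt K * \<bar>\<bar>p\<bar> powr (1-\<theta>)\<bar> powr (1 - 1/2) *
     \<bar>\<bar>q\<bar> powr (1-\<theta>) * \<bar>X\<bar> powr (2*\<theta>) / K\<bar> powr (1/2))"
    using l p q False assms(2) by (simp add: ln_mult ln_powr ln_div ln_sqrt)
  finally show ?thesis using False l p q assms(2)
    by (subst (asm) ln_le_cancel_iff) auto
qed (use assms in simp)

lemma ln_abs_half_factorization:
  fixes X a b :: real
  assumes "X \<noteq> 0" "\<bar>X\<bar> = \<bar>a\<bar> powr (1 - 1/2) * \<bar>b\<bar> powr (1/2)"
  shows "a \<noteq> 0" "b \<noteq> 0" "2 * ln \<bar>X\<bar> = ln \<bar>a\<bar> + ln \<bar>b\<bar>"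
proof -
  show a: "a \<noteq> 0" and b: "b \<noteq> 0" using assms by auto
  have "ln \<bar>X\<bar> = ln \<bar>a\<bar> / 2 + ln \<bar>b\<bar> / 2"
    using a b by (simp add: assms(2) ln_mult ln_powr)
  then show "2 * ln \<bar>X\<bar> = ln \<bar>a\<bar> + ln \<bar>b\<bar>" by simp
qed

lemma differential_difference_sq_le:
  fixes X a b a' b' n :: real
  assumes X: "X \<noteq> 0" and n: "0 < n"
    and fac: "\<bar>X\<bar> = \<bar>a\<bar> powr (1 - 1/2) * \<bar>b\<bar> powr (1/2)"
    and fac': "\<bar>X\<bar> = \<bar>a'\<bar> powr (1 - 1/2) * \<bar>b'\<bar> powr (1/2)"
  shows "(X * ln (\<bar>b'\<bar> / \<bar>a'\<bar>) - (1-\<theta>) * (X * ln (\<bar>b\<bar> / \<bar>a\<bar>)) - \<theta> * (2 * X * ln (\<bar>X\<bar> / n)))\<^sup>2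
     \<le> 16 * (\<bar>b'\<bar> * \<bar>a\<bar> powr (1-\<theta>) * n powr \<theta> + \<bar>a'\<bar> * \<bar>b\<bar> powr (1-\<theta>) * \<bar>X\<bar> powr (2*\<theta>) * n powr (-\<theta>))"
    (is "?D\<^sup>2 \<le> 16 * (?p + ?q)")
proof -
  \<comment> \<open>The difference is X ln (p/q) with p q = X^4, which reduces the claim to the one-variable bound.\<close>
  note ab = ln_abs_half_factorization[OF X fac] and ab' = ln_abs_half_factorization[OF X fac']
  have pq: "0 < ?p" "0 < ?q" using ab(1,2) ab'(1,2) X n by auto
  have ln_p: "ln ?p = ln \<bar>b'\<bar> + (1-\<theta>) * ln \<bar>a\<bar> + \<theta> * ln n"
    using ab(1) ab'(2) n by (simp add: ln_mult ln_powr)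
  have ln_q: "ln ?q = ln \<bar>a'\<bar> + (1-\<theta>) * ln \<bar>b\<bar> + 2 * \<theta> * ln \<bar>X\<bar> - \<theta> * ln n"
    using ab(2) ab'(1) X n by (simp add: ln_mult ln_powr)
  have "ln (?p * ?q) = ln ?p + ln ?q" using pq by (rule ln_mult_pos)
  also have "\<dots> = 4 * ln \<bar>X\<bar>"
    using arg_cong[OF ab(3), of "\<lambda>t. (1-\<theta>) * t"] ab'(3)
    unfolding ln_p ln_q by (simp add: algebra_simps)
  also have "\<dots> = ln (X ^ 4)" by (simp add: ln_realpow abs_if ln_minus)
  finally have "ln (?p * ?q) = ln (X ^ 4)" .
  then have "?p * ?q = X ^ 4"
    using pq X by (subst (asm) ln_inj_iff) auto
  moreover have "?D = X * (ln ?p - ln ?q)"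
    using ab(1,2) ab'(1,2) X n unfolding ln_p ln_q by (simp add: ln_div algebra_simps)
  then have "?D = X * ln (?p / ?q)" by (simp only: ln_divide_pos[OF pq])
  ultimately show ?thesis using sq_mult_ln_quotient_le[OF pq] by simp
qed

section \<open>Koethe duals and Calderon products\<close>

lemma koethe_cmult:
  "koethe M N \<Longrightarrow> f \<in> borel_measurable M \<Longrightarrow> N (\<lambda>s. c * f s) = ennreal \<bar>c\<bar> * N f"
  unfolding koethe_def by blast

lemma nn_integral_le_kdual:
  assumes "f \<in> borel_measurable M" "g \<in> borel_measurable M" "NA f \<le> 1"
  shows "(\<integral>\<^sup>+ s. ennreal \<bar>f s * g s\<bar> \<partial>M) \<le> kdual M NA g"
  unfolding kdual_def using assms by (auto intro!: SUP_upper)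

lemma kdual_leI:
  assumes "g \<in> borel_measurable M"
    and "\<And>f. f \<in> borel_measurable M \<Longrightarrow> NA f \<le> 1 \<Longrightarrow> (\<integral>\<^sup>+ s. ennreal \<bar>f s * g s\<bar> \<partial>M) \<le> c"
  shows "kdual M NA g \<le> c"
  unfolding kdual_def using assms by (auto intro!: SUP_least)

lemma calderon_le:
  assumes "x \<in> borel_measurable M" "0 \<le> l" "a \<in> borel_measurable M" "b \<in> borel_measurable M"
    "NA a \<le> 1" "NB b \<le> 1"
    "AE s in M. \<bar>x s\<bar> \<le> l * \<bar>a s\<bar> powr (1 - \<theta>) * \<bar>b s\<bar> powr \<theta>"
  shows "calderon M \<theta> NA NB x \<le> ennreal l"
  unfolding calderon_def using assms by (auto intro!: Inf_lower)

lemma calderon_lessE: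
  assumes "calderon M \<theta> NA NB x < t"
  obtains l a b where "x \<in> borel_measurable M" "0 \<le> l" "ennreal l < t"
    "a \<in> borel_measurable M" "b \<in> borel_measurable M" "NA a \<le> 1" "NB b \<le> 1"
    "AE s in M. \<bar>x s\<bar> \<le> l * \<bar>a s\<bar> powr (1 - \<theta>) * \<bar>b s\<bar> powr \<theta>"
proof -
  have "x \<in> borel_measurable M" using assms unfolding calderon_def by (auto split: if_splits)
  with assms that show ?thesis unfolding calderon_def by (auto simp: Inf_less_iff)
qed

lemma calderon_le_cmult:
  assumes x: "x \<in> borel_measurable M" and y: "y \<in> borel_measurable M" and c: "0 < c"
    and dom: "AE s in M. \<bar>x s\<bar> \<le> c * \<bar>y s\<bar>"
  shows "calderon M \<theta> NA NB x \<le> ennreal c * calderon M \<theta> NA NB y"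
proof (rule ennreal_le_epsilon)
  fix e :: real assume fin: "ennreal c * calderon M \<theta> NA NB y < top" and e: "0 < e"
  then have "calderon M \<theta> NA NB y < top"
    using c by (auto simp: ennreal_mult_less_top top.not_eq_extremum)
  then have "calderon M \<theta> NA NB y < calderon M \<theta> NA NB y + ennreal (e/c)"
    using e c ennreal_add_left_cancel_less[of "calderon M \<theta> NA NB y" 0 "ennreal (e/c)"] by simp
  then obtain l a b where l: "0 \<le> l" "ennreal l < calderon M \<theta> NA NB y + ennreal (e/c)"
    and ab: "a \<in> borel_measurable M" "b \<in> borel_measurable M" "NA a \<le> 1" "NB b \<le> 1"
    and fac: "AE s in M. \<bar>y s\<bar> \<le> l * \<bar>a s\<bar> powr (1 - \<theta>) * \<bar>b s\<bar> powr \<theta>"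
    by (rule calderon_lessE)
  have "AE s in M. \<bar>x s\<bar> \<le> (c * l) * \<bar>a s\<bar> powr (1 - \<theta>) * \<bar>b s\<bar> powr \<theta>"
    using fac dom
  proof eventually_elim
    case (elim s)
    then have "c * \<bar>y s\<bar> \<le> c * (l * \<bar>a s\<bar> powr (1 - \<theta>) * \<bar>b s\<bar> powr \<theta>)" using c by simp
    with elim show ?case by (simp add: mult.assoc)
  qed
  then have "calderon M \<theta> NA NB x \<le> ennreal (c * l)"
    using c l by (intro calderon_le[where l="c * l" and a=a and b=b]) (auto simp: x ab)
  also have "\<dots> \<le> ennreal c * (calderon M \<theta> NA NB y + ennreal (e/c))"
    using c l by (simp add: ennreal_mult mult_left_mono)
  also have "\<dots> = ennreal c * calderon M \<theta> NA NB y + ennreal e"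
    using c e by (simp add: distrib_left flip: ennreal_mult)
  finally show "calderon M \<theta> NA NB x \<le> ennreal c * calderon M \<theta> NA NB y + ennreal e" .
qed

lemma Linfnorm_const_one: "Linfnorm M (\<lambda>s. 1) \<le> 1"
  unfolding Linfnorm_def by (auto intro!: Inf_lower exI[of _ 1])

lemma AE_abs_less_2_if_Linfnorm_le_1:
  assumes "Linfnorm M v \<le> 1"
  shows "AE s in M. \<bar>v s\<bar> < 2"
proof -
  have "Linfnorm M v < 2"
    using assms by (rule le_less_trans) simp
  then have "Inf {ennreal c | c. 0 \<le> c \<and> (AE s in M. \<bar>v s\<bar> \<le> c)} < 2"
    unfolding Linfnorm_def by (auto split: if_splits)
  then obtain c where c: "ennreal c < 2" "AE s in M. \<bar>v s\<bar> \<le> c"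
    by (auto simp: Inf_less_iff)
  then have "c < 2" by (simp add: ennreal_less_iff)
  with c(2) show ?thesis by (auto elim: eventually_mono)
qed

lemma calderon_Linfnorm_powr_le_1:
  assumes "a \<in> borel_measurable M" "N a \<le> 1"
  shows "calderon M \<theta> N (Linfnorm M) (\<lambda>s. \<bar>a s\<bar> powr (1 - \<theta>)) \<le> 1"
  using calderon_le[where M=M and l=1 and a=a and b="\<lambda>s. 1" and NA=N and NB="Linfnorm M" and \<theta>=\<theta>
      and x="\<lambda>s. \<bar>a s\<bar> powr (1 - \<theta>)"] assms
  by (simp add: Linfnorm_const_one)

section \<open>Calderon spaces equal to L2\<close>

lemma kspace_L2normE:
  assumes "x \<in> kspace M (L2norm M)"
  obtains n where "x \<in> borel_measurable M" "0 \<le> n" "L2norm M x = ennreal n"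
    "(\<integral>\<^sup>+ s. ennreal ((x s)\<^sup>2) \<partial>M) = ennreal (n\<^sup>2)"
proof
  let ?I = "\<integral>\<^sup>+ s. ennreal ((x s)\<^sup>2) \<partial>M"
  show x: "x \<in> borel_measurable M"
    using assms unfolding kspace_def by auto
  have fin: "?I \<noteq> \<infinity>"
    using assms unfolding kspace_def L2norm_def by (auto simp: Let_def split: if_splits)
  with x show "L2norm M x = ennreal (sqrt (enn2real ?I))"
    unfolding L2norm_def by (simp add: Let_def)
  show "?I = ennreal ((sqrt (enn2real ?I))\<^sup>2)"
    using fin by (simp add: ennreal_enn2real_if)
qed simp

lemma kspace_L2normI:
  assumes "x \<in> borel_measurable M" "(\<integral>\<^sup>+ s. ennreal ((x s)\<^sup>2) \<partial>M) < \<infinity>"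
  shows "x \<in> kspace M (L2norm M)"
  using assms unfolding kspace_def L2norm_def by (auto simp: Let_def)

lemma L2norm_le_if_nn_integral_sq_le:
  assumes "f \<in> borel_measurable M" "(\<integral>\<^sup>+ s. ennreal ((f s)\<^sup>2) \<partial>M) \<le> ennreal (r\<^sup>2)" "0 \<le> r"
  shows "L2norm M f \<le> ennreal r"
proof -
  have fin: "(\<integral>\<^sup>+ s. ennreal ((f s)\<^sup>2) \<partial>M) \<noteq> \<infinity>" using assms(2) by (auto simp: top_unique)
  then have "enn2real (\<integral>\<^sup>+ s. ennreal ((f s)\<^sup>2) \<partial>M) \<le> r\<^sup>2"
    using assms(2) by (simp add: enn2real_leI)
  then have "sqrt (enn2real (\<integral>\<^sup>+ s. ennreal ((f s)\<^sup>2) \<partial>M)) \<le> sqrt (r\<^sup>2)"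
    by (rule real_sqrt_le_mono)
  then have "sqrt (enn2real (\<integral>\<^sup>+ s. ennreal ((f s)\<^sup>2) \<partial>M)) \<le> r"
    using assms(3) by simp
  then show ?thesis using assms(1) fin unfolding L2norm_def by (simp add: Let_def ennreal_leI)
qed

lemma L2_envelope:
  assumes y: "\<And>n. y n \<in> borel_measurable M"
    and sum: "(\<Sum>n. \<integral>\<^sup>+ s. ennreal ((y n s)\<^sup>2) \<partial>M) < \<infinity>"
  obtains S where "S \<in> kspace M (L2norm M)" "\<And>n. AE s in M. \<bar>y n s\<bar> \<le> S s"
proof
  define T where "T s = (\<Sum>n. ennreal ((y n s)\<^sup>2))" for s
  define S where "S s = sqrt (enn2real (T s))" for s
  have T: "T \<in> borel_measurable M" unfolding T_def using y by measurable
  have S: "S \<in> borel_measurable M" unfolding S_def using T by measurable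
  have "(\<integral>\<^sup>+ s. T s \<partial>M) = (\<Sum>n. \<integral>\<^sup>+ s. ennreal ((y n s)\<^sup>2) \<partial>M)"
    unfolding T_def using y by (subst nn_integral_suminf) auto
  with sum have Tint: "(\<integral>\<^sup>+ s. T s \<partial>M) < \<infinity>" by simp
  have "(\<integral>\<^sup>+ s. ennreal ((S s)\<^sup>2) \<partial>M) \<le> (\<integral>\<^sup>+ s. T s \<partial>M)"
    unfolding S_def by (intro nn_integral_mono) (simp add: ennreal_enn2real_if)
  also have "\<dots> < \<infinity>" by (fact Tint)
  finally show "S \<in> kspace M (L2norm M)"
    by (rule kspace_L2normI[OF S])
  fix n
  have "AE s in M. T s \<noteq> \<infinity>"
    using Tint by (intro nn_integral_noteq_infinite[OF T]) simp
  then show "AE s in M. \<bar>y n s\<bar> \<le> S s"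
  proof eventually_elim
    case (elim s)
    have "(\<Sum>i\<in>{n}. ennreal ((y i s)\<^sup>2)) \<le> T s"
      unfolding T_def by (intro sum_le_suminf) auto
    then have "ennreal ((y n s)\<^sup>2) \<le> T s" by simp
    also have "T s = ennreal (enn2real (T s))"
      using elim by (simp add: ennreal_enn2real_if)
    finally have "(y n s)\<^sup>2 \<le> enn2real (T s)"
      by (simp add: ennreal_le_iff)
    then have "sqrt ((y n s)\<^sup>2) \<le> S s"
      unfolding S_def by (rule real_sqrt_le_mono)
    then show ?case by simp
  qed
qed

lemma L2_envelope_weighted:
  assumes X: "\<And>n. X n \<in> borel_measurable M"
    and r: "\<And>n. 0 < r n" "\<And>n. (\<integral>\<^sup>+ s. ennreal ((X n s)\<^sup>2) \<partial>M) = ennreal ((r n)\<^sup>2)"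
  obtains S where "S \<in> kspace M (L2norm M)" "\<And>n. AE s in M. \<bar>X n s\<bar> \<le> 2^n * r n * S s"
proof -
  define y where "y n s = \<bar>X n s\<bar> / (2^n * r n)" for n s
  have y: "y n \<in> borel_measurable M" for n unfolding y_def using X by measurable
  have "(\<integral>\<^sup>+ s. ennreal ((y n s)\<^sup>2) \<partial>M) = ennreal ((1/4)^n)" for n
  proof -
    have "(\<integral>\<^sup>+ s. ennreal ((y n s)\<^sup>2) \<partial>M) = (\<integral>\<^sup>+ s. ennreal (1 / (2^n * r n)\<^sup>2) * ennreal ((X n s)\<^sup>2) \<partial>M)"
      unfolding y_def by (intro nn_integral_cong) (simp add: power_divide flip: ennreal_mult)
    also have "\<dots> = ennreal (1 / (2^n * r n)\<^sup>2) * ennreal ((r n)\<^sup>2)"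
      using X r(2) by (simp add: nn_integral_cmult)
    also have "\<dots> = ennreal (1 / (2^n * r n)\<^sup>2 * (r n)\<^sup>2)"
      by (simp flip: ennreal_mult)
    also have "1 / (2^n * r n)\<^sup>2 * (r n)\<^sup>2 = 1 / (2^n)\<^sup>2"
      using r(1)[of n] by (simp add: power_mult_distrib)
    also have "\<dots> = (1/4)^n"
    proof -
      have "(2::real)^n * 2^n = 4^n" by (simp flip: power_mult_distrib)
      then show ?thesis by (simp add: power2_eq_square power_one_over)
    qed
    finally show ?thesis .
  qed
  then have "(\<Sum>n. \<integral>\<^sup>+ s. ennreal ((y n s)\<^sup>2) \<partial>M) = (\<Sum>n. ennreal ((1/4)^n))"
    by simp
  also have "\<dots> < \<infinity>"
    unfolding infinity_ennreal_def less_top[symmetric]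
    by (rule ennreal_suminf_neq_top) (auto intro: summable_geometric)
  finally obtain S where S: "S \<in> kspace M (L2norm M)" "\<And>n. AE s in M. \<bar>y n s\<bar> \<le> S s"
    by (rule L2_envelope[OF y]) auto
  have "AE s in M. \<bar>X n s\<bar> \<le> 2^n * r n * S s" for n
    using S(2)[of n] r(1)[of n] by (elim eventually_mono) (simp add: y_def pos_divide_le_eq mult_ac)
  with S(1) show ?thesis by (rule that)
qed

lemma calderon_bounded_by_L2norm:
  assumes sub: "kspace M (L2norm M) \<subseteq> kspace M (calderon M \<theta> NA NB)"
  shows "\<exists>K. \<forall>x\<in>kspace M (L2norm M). 0 < L2norm M x \<longrightarrow>
           calderon M \<theta> NA NB x \<le> ennreal K * L2norm M x"
proof (rule ccontr)
  let ?C = "calderon M \<theta> NA NB"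
  assume "\<not> ?thesis"
  then have "\<forall>n::nat. \<exists>x \<in> kspace M (L2norm M). 0 < L2norm M x \<and> ennreal (4^n) * L2norm M x < ?C x"
    by (auto simp: not_le)
  then obtain X where X: "\<And>n. X n \<in> kspace M (L2norm M)" "\<And>n. 0 < L2norm M (X n)"
    "\<And>n. ennreal (4^n) * L2norm M (X n) < ?C (X n)" by metis
  have "\<exists>r>0. X n \<in> borel_measurable M \<and> L2norm M (X n) = ennreal r \<and>
          (\<integral>\<^sup>+ s. ennreal ((X n s)\<^sup>2) \<partial>M) = ennreal (r\<^sup>2)" for n
    using X(2)[of n] by (cases rule: kspace_L2normE[OF X(1)]) (auto simp: less_le)
  then obtain r where r: "\<And>n. 0 < r n" "\<And>n. X n \<in> borel_measurable M"
    "\<And>n. L2norm M (X n) = ennreal (r n)" "\<And>n. (\<integral>\<^sup>+ s. ennreal ((X n s)\<^sup>2) \<partial>M) = ennreal ((r n)\<^sup>2)"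
    by metis
  obtain S where S: "S \<in> kspace M (L2norm M)" "\<And>n. AE s in M. \<bar>X n s\<bar> \<le> 2^n * r n * S s"
    using L2_envelope_weighted[where X=X and r=r, OF r(2) r(1,4)] by blast
  have "?C S < \<infinity>" using S(1) sub unfolding kspace_def by auto
  then obtain R where R: "?C S = ennreal R" by (auto simp: less_top_ennreal)
  obtain n :: nat where "R < 2^n" using real_arch_pow[of 2 R] by auto
  have "?C (X n) \<le> ennreal (2^n * r n) * ?C S"
  proof (rule calderon_le_cmult[OF r(2)])
    show "S \<in> borel_measurable M" using S(1) unfolding kspace_def by simp
    show "AE s in M. \<bar>X n s\<bar> \<le> 2^n * r n * \<bar>S s\<bar>"
      using S(2)[of n] r(1)[of n] by (elim eventually_mono) (erule order_trans, intro mult_left_mono, auto)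
  qed (use r(1) in simp)
  also have "\<dots> < ennreal (2^n * r n) * ennreal (2^n)"
  proof (rule ennreal_mult_strict_left_mono)
    show "?C S < ennreal (2^n)" using R \<open>R < 2^n\<close> by (simp add: ennreal_lessI)
  qed (use r(1) in simp_all)
  also have "\<dots> = ennreal (2^n * r n * 2^n)"
    using r(1)[of n] by (simp flip: ennreal_mult)
  also have "2^n * r n * 2^n = 4^n * r n"
  proof -
    have four: "(2::real)^n * 2^n = 4^n" by (simp flip: power_mult_distrib)
    show ?thesis unfolding four[symmetric] by (simp add: mult_ac)
  qed
  also have "ennreal (4^n * r n) = ennreal (4^n) * L2norm M (X n)"
    using r(1)[of n] by (simp add: r(3) ennreal_mult)
  finally show False using X(3)[of n] by simp
qed

lemma almost_opt_fact_le_L2norm: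
  assumes opt: "almost_opt_fact M \<theta> NA NB C a b"
    and eq: "kspace M (calderon M \<theta> NA NB) = kspace M (L2norm M)"
  obtains c where "0 < c"
    "\<And>x n. x \<in> kspace M (L2norm M) \<Longrightarrow> L2norm M x = ennreal n \<Longrightarrow> 0 < n \<Longrightarrow>
       NA (a x) \<le> ennreal (c * n) \<and> NB (b x) \<le> ennreal (c * n)"
proof -
  obtain K where K: "\<And>x. x \<in> kspace M (L2norm M) \<Longrightarrow> 0 < L2norm M x \<Longrightarrow>
      calderon M \<theta> NA NB x \<le> ennreal K * L2norm M x"
    using calderon_bounded_by_L2norm[of M \<theta> NA NB] eq by auto
  have "NA (a x) \<le> ennreal (max C 1 * max K 1 * n) \<and> NB (b x) \<le> ennreal (max C 1 * max K 1 * n)"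
    if x: "x \<in> kspace M (L2norm M)" "L2norm M x = ennreal n" "0 < n" for x n
  proof -
    have "calderon M \<theta> NA NB x \<le> ennreal K * ennreal n" using K[OF x(1)] x(2,3) by simp
    also have "\<dots> \<le> ennreal (max K 1 * n)" using x(3) by (simp add: ennreal_mult' mult_right_mono ennreal_leI)
    finally have "ennreal C * calderon M \<theta> NA NB x \<le> ennreal (max C 1) * ennreal (max K 1 * n)"
      by (intro mult_mono ennreal_leI) auto
    also have "\<dots> = ennreal (max C 1 * max K 1 * n)" using x(3) by (simp add: ennreal_mult' mult.assoc)
    finally show ?thesis
      using opt x(1) eq unfolding almost_opt_fact_def by (blast intro: order_trans)
  qed
  then show ?thesis using that[of "max C 1 * max K 1"] by simp
qed

lemma kspace_calderon_kdual_subset_L2: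
  "kspace M (calderon M (1/2) NA (kdual M NA)) \<subseteq> kspace M (L2norm M)"
proof
  fix x assume "x \<in> kspace M (calderon M (1/2) NA (kdual M NA))"
  then have "calderon M (1/2) NA (kdual M NA) x < \<infinity>" unfolding kspace_def by auto
  then obtain l a b where x: "x \<in> borel_measurable M" and l: "0 \<le> l"
    and ab: "a \<in> borel_measurable M" "b \<in> borel_measurable M" "NA a \<le> 1" "kdual M NA b \<le> 1"
    and fac: "AE s in M. \<bar>x s\<bar> \<le> l * \<bar>a s\<bar> powr (1 - 1/2) * \<bar>b s\<bar> powr (1/2)"
    by (rule calderon_lessE)
  have "(\<integral>\<^sup>+ s. ennreal ((x s)\<^sup>2) \<partial>M) \<le> (\<integral>\<^sup>+ s. ennreal (l\<^sup>2) * ennreal \<bar>a s * b s\<bar> \<partial>M)"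
    using fac by (intro nn_integral_mono_AE) (auto elim!: eventually_mono simp flip: ennreal_mult
        intro!: ennreal_leI sq_le_of_abs_le_half_factorization[OF l])
  also have "\<dots> = ennreal (l\<^sup>2) * (\<integral>\<^sup>+ s. ennreal \<bar>a s * b s\<bar> \<partial>M)"
    using ab by (simp add: nn_integral_cmult)
  also have "\<dots> \<le> ennreal (l\<^sup>2) * 1"
    using nn_integral_le_kdual[where NA=NA, OF ab(1,2,3)] ab(4) by (intro mult_left_mono) auto
  also have "\<dots> < \<infinity>" by simp
  finally show "x \<in> kspace M (L2norm M)" by (rule kspace_L2normI[OF x])
qed

lemma nn_integral_pairing_calderon_Linfnorm_le:
  assumes th: "0 < \<theta>" "\<theta> < 1"
    and b: "b \<in> borel_measurable M" "kdual M N b \<le> ennreal A" "0 < A"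
    and x: "x \<in> borel_measurable M" "(\<integral>\<^sup>+ s. ennreal ((x s)\<^sup>2) \<partial>M) \<le> ennreal m" "0 < m"
    and f: "calderon M \<theta> N (Linfnorm M) f < ennreal t"
  shows "(\<integral>\<^sup>+ s. ennreal (\<bar>f s\<bar> * (\<bar>b s\<bar> powr (1-\<theta>) * \<bar>x s\<bar> powr (2*\<theta>))) \<partial>M)
    \<le> ennreal (2 * t * A powr (1-\<theta>) * m powr \<theta>)"
proof -
  from f obtain l u v where l: "0 \<le> l" "ennreal l < ennreal t"
    and uv: "u \<in> borel_measurable M" "v \<in> borel_measurable M" "N u \<le> 1" "Linfnorm M v \<le> 1"
    and fac: "AE s in M. \<bar>f s\<bar> \<le> l * \<bar>u s\<bar> powr (1 - \<theta>) * \<bar>v s\<bar> powr \<theta>"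
    by (rule calderon_lessE)
  define K1 where "K1 = 2 * l * A powr (1-\<theta>) * m powr \<theta> * (1-\<theta>) / A"
  define K2 where "K2 = 2 * l * A powr (1-\<theta>) * m powr \<theta> * \<theta> / m"
  have K: "0 \<le> K1" "0 \<le> K2" unfolding K1_def K2_def using l th b x by auto
  have "(\<integral>\<^sup>+ s. ennreal (\<bar>f s\<bar> * (\<bar>b s\<bar> powr (1-\<theta>) * \<bar>x s\<bar> powr (2*\<theta>))) \<partial>M)
     \<le> (\<integral>\<^sup>+ s. ennreal K1 * ennreal \<bar>u s * b s\<bar> + ennreal K2 * ennreal ((x s)\<^sup>2) \<partial>M)"
    using fac AE_abs_less_2_if_Linfnorm_le_1[OF uv(4)]
  proof (intro nn_integral_mono_AE, eventually_elim)
    case (elim s)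
    have "\<bar>f s\<bar> * (\<bar>b s\<bar> powr (1-\<theta>) * \<bar>x s\<bar> powr (2*\<theta>)) \<le> K1 * \<bar>u s * b s\<bar> + K2 * (x s)\<^sup>2"
      unfolding K1_def K2_def using elim l th b x by (intro Young_bound_of_factorization) auto
    then have "ennreal (\<bar>f s\<bar> * (\<bar>b s\<bar> powr (1-\<theta>) * \<bar>x s\<bar> powr (2*\<theta>)))
        \<le> ennreal (K1 * \<bar>u s * b s\<bar> + K2 * (x s)\<^sup>2)"
      by (rule ennreal_leI)
    then show ?case using K by (simp add: ennreal_mult)
  qed
  also have "\<dots> = ennreal K1 * (\<integral>\<^sup>+ s. ennreal \<bar>u s * b s\<bar> \<partial>M) + ennreal K2 * (\<integral>\<^sup>+ s. ennreal ((x s)\<^sup>2) \<partial>M)"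
    using uv b x by (simp add: nn_integral_add nn_integral_cmult)
  also have "\<dots> \<le> ennreal K1 * ennreal A + ennreal K2 * ennreal m"
    using nn_integral_le_kdual[where NA=N, OF uv(1) b(1) uv(3)] b(2) x(2)
    by (intro add_mono mult_left_mono) auto
  also have "\<dots> = ennreal (2 * l * A powr (1-\<theta>) * m powr \<theta>)"
    using K b x by (simp add: K1_def K2_def field_simps flip: ennreal_mult ennreal_plus)
  also have "\<dots> \<le> ennreal (2 * t * A powr (1-\<theta>) * m powr \<theta>)"
    using l by (intro ennreal_leI mult_right_mono) (auto simp: ennreal_less_iff)
  finally show ?thesis .
qed

lemma kdual_interpolated_second_factor_le_1:
  assumes th: "0 < \<theta>" "\<theta> < 1"
    and b: "b \<in> borel_measurable M" "kdual M N b \<le> 1"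
    and x: "x \<in> borel_measurable M" "0 < m" "(\<integral>\<^sup>+ s. ennreal ((x s)\<^sup>2) \<partial>M) \<le> ennreal m"
  shows "kdual M (calderon M \<theta> N (Linfnorm M))
    (\<lambda>s. \<bar>b s\<bar> powr (1-\<theta>) * \<bar>x s\<bar> powr (2*\<theta>) / (4 * m powr \<theta>)) \<le> 1"
proof (rule kdual_leI)
  show "(\<lambda>s. \<bar>b s\<bar> powr (1-\<theta>) * \<bar>x s\<bar> powr (2*\<theta>) / (4 * m powr \<theta>)) \<in> borel_measurable M"
    using b x by measurable
  fix g assume g: "g \<in> borel_measurable M" "calderon M \<theta> N (Linfnorm M) g \<le> 1"
  have "(\<integral>\<^sup>+ s. ennreal \<bar>g s * (\<bar>b s\<bar> powr (1-\<theta>) * \<bar>x s\<bar> powr (2*\<theta>) / (4 * m powr \<theta>))\<bar> \<partial>M)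
      = ennreal (1 / (4 * m powr \<theta>)) * (\<integral>\<^sup>+ s. ennreal (\<bar>g s\<bar> * (\<bar>b s\<bar> powr (1-\<theta>) * \<bar>x s\<bar> powr (2*\<theta>))) \<partial>M)"
    using g b x by (subst nn_integral_cmult[symmetric])
      (auto intro!: nn_integral_cong simp: abs_mult simp flip: ennreal_mult)
  also have "\<dots> \<le> ennreal (1 / (4 * m powr \<theta>)) * ennreal (2 * 2 * 1 powr (1-\<theta>) * m powr \<theta>)"
    using g(2) b x
    by (intro mult_left_mono nn_integral_pairing_calderon_Linfnorm_le[OF th]) (auto intro: le_less_trans)
  also have "\<dots> = 1" using x(2) by (simp flip: ennreal_mult)
  finally show "(\<integral>\<^sup>+ s. ennreal \<bar>g s * (\<bar>b s\<bar> powr (1-\<theta>) * \<bar>x s\<bar> powr (2*\<theta>) / (4 * m powr \<theta>))\<bar> \<partial>M) \<le> 1" .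
qed

lemma kspace_calderon_interpolated_kdual_eq_L2:
  assumes eq: "kspace M (calderon M (1/2) N (kdual M N)) = kspace M (L2norm M)"
    and th: "0 < \<theta>" "\<theta> < 1"
  defines "N\<theta> \<equiv> calderon M \<theta> N (Linfnorm M)"
  shows "kspace M (calderon M (1/2) N\<theta> (kdual M N\<theta>)) = kspace M (L2norm M)"
proof
  show "kspace M (calderon M (1/2) N\<theta> (kdual M N\<theta>)) \<subseteq> kspace M (L2norm M)"
    by (rule kspace_calderon_kdual_subset_L2)
  show "kspace M (L2norm M) \<subseteq> kspace M (calderon M (1/2) N\<theta> (kdual M N\<theta>))"
  proof
    fix x assume xL: "x \<in> kspace M (L2norm M)"
    then obtain n where n: "0 \<le> n" "(\<integral>\<^sup>+ s. ennreal ((x s)\<^sup>2) \<partial>M) = ennreal (n\<^sup>2)"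
      by (rule kspace_L2normE)
    have "calderon M (1/2) N (kdual M N) x < \<infinity>" using xL eq unfolding kspace_def by auto
    then obtain l a b where x: "x \<in> borel_measurable M" and l: "0 \<le> l"
      and ab: "a \<in> borel_measurable M" "b \<in> borel_measurable M" "N a \<le> 1" "kdual M N b \<le> 1"
      and fac: "AE s in M. \<bar>x s\<bar> \<le> l * \<bar>a s\<bar> powr (1 - 1/2) * \<bar>b s\<bar> powr (1/2)"
      by (rule calderon_lessE)
    define m where "m = n\<^sup>2 + 1"
    have m: "0 < m" "(\<integral>\<^sup>+ s. ennreal ((x s)\<^sup>2) \<partial>M) \<le> ennreal m"
      unfolding m_def n by (auto intro!: add_nonneg_pos ennreal_leI)
    define K where "K = 4 * m powr \<theta>"
    have K: "0 < K" unfolding K_def using m by simp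
    define \<alpha> where "\<alpha> s = \<bar>a s\<bar> powr (1-\<theta>)" for s
    define \<beta> where "\<beta> s = \<bar>b s\<bar> powr (1-\<theta>) * \<bar>x s\<bar> powr (2*\<theta>) / K" for s
    have \<alpha>: "\<alpha> \<in> borel_measurable M" "N\<theta> \<alpha> \<le> 1"
      unfolding \<alpha>_def N\<theta>_def using ab by (auto intro: calderon_Linfnorm_powr_le_1)
    have "kdual M N\<theta> \<beta> \<le> 1"
      unfolding \<beta>_def K_def N\<theta>_def by (rule kdual_interpolated_second_factor_le_1[OF th ab(2,4) x m])
    moreover have "AE s in M. \<bar>x s\<bar> \<le> (l powr (1-\<theta>) * sqrt K) * \<bar>\<alpha> s\<bar> powr (1 - 1/2) * \<bar>\<beta> s\<bar> powr (1/2)"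
      using fac unfolding \<alpha>_def \<beta>_def
      by eventually_elim (rule abs_le_interpolated_half_factorization[OF l K th])
    ultimately have "calderon M (1/2) N\<theta> (kdual M N\<theta>) x \<le> ennreal (l powr (1-\<theta>) * sqrt K)"
      using K \<alpha> ab(2) x unfolding \<beta>_def by (intro calderon_le[OF x]) auto
    then show "x \<in> kspace M (calderon M (1/2) N\<theta> (kdual M N\<theta>))"
      unfolding kspace_def using x by (auto simp: le_less_trans)
  qed
qed

section \<open>The differentials\<close>

lemma nn_integral_powr_mult_le_kdual:
  assumes N: "koethe M N" and a: "a \<in> borel_measurable M" "N a \<le> ennreal A" "0 < A"
    and g: "g \<in> borel_measurable M"
  shows "(\<integral>\<^sup>+ s. ennreal (\<bar>a s\<bar> powr (1-\<theta>) * \<bar>g s\<bar>) \<partial>M)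
    \<le> ennreal (A powr (1-\<theta>)) * kdual M (calderon M \<theta> N (Linfnorm M)) g"
proof -
  define a0 where "a0 s = (1/A) * a s" for s
  have a0: "a0 \<in> borel_measurable M" unfolding a0_def using a(1) by measurable
  have "N a0 = ennreal \<bar>1/A\<bar> * N a"
    unfolding a0_def by (rule koethe_cmult[OF N a(1)])
  also have "\<dots> \<le> ennreal (1/A) * ennreal A" using a(2,3) by (auto intro: mult_left_mono)
  also have "\<dots> = 1" using a(3) by (simp flip: ennreal_mult)
  finally have "N a0 \<le> 1" .
  then have "calderon M \<theta> N (Linfnorm M) (\<lambda>s. \<bar>a0 s\<bar> powr (1-\<theta>)) \<le> 1"
    by (rule calderon_Linfnorm_powr_le_1[OF a0])
  then have pair: "(\<integral>\<^sup>+ s. ennreal \<bar>\<bar>a0 s\<bar> powr (1-\<theta>) * g s\<bar> \<partial>M) \<le> kdual M (calderon M \<theta> N (Linfnorm M)) g"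
    using a0 g by (intro nn_integral_le_kdual) auto
  have "\<bar>a s\<bar> powr (1-\<theta>) * \<bar>g s\<bar> = A powr (1-\<theta>) * \<bar>\<bar>a0 s\<bar> powr (1-\<theta>) * g s\<bar>" for s
    using a(3) by (simp add: a0_def abs_mult powr_mult powr_divide)
  then have "(\<integral>\<^sup>+ s. ennreal (\<bar>a s\<bar> powr (1-\<theta>) * \<bar>g s\<bar>) \<partial>M)
      = ennreal (A powr (1-\<theta>)) * (\<integral>\<^sup>+ s. ennreal \<bar>\<bar>a0 s\<bar> powr (1-\<theta>) * g s\<bar> \<partial>M)"
    using a0 g by (simp add: ennreal_mult nn_integral_cmult)
  with pair show ?thesis by (simp add: mult_left_mono)
qed

lemma AE_differential_difference_sq_le:
  assumes x: "L2norm M x = ennreal n" "0 < n"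
    and fac: "AE s in M. \<bar>x s\<bar> = \<bar>a x s\<bar> powr (1 - 1/2) * \<bar>b x s\<bar> powr (1/2)"
    and fac': "AE s in M. \<bar>x s\<bar> = \<bar>a' x s\<bar> powr (1 - 1/2) * \<bar>b' x s\<bar> powr (1/2)"
  shows "AE s in M. (differential a' b' x s - (1-\<theta>) * differential a b x s - \<theta> * KP2 M x s)\<^sup>2
    \<le> 16 * n powr \<theta> * (\<bar>a x s\<bar> powr (1-\<theta>) * \<bar>b' x s\<bar>)
      + 16 * n powr (-\<theta>) * (\<bar>a' x s\<bar> * (\<bar>b x s\<bar> powr (1-\<theta>) * \<bar>x s\<bar> powr (2*\<theta>)))"
  using fac fac'
proof eventually_elim
  case (elim s)
  show ?case
  proof (cases "x s = 0")
    case False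
    then show ?thesis
      using differential_difference_sq_le[OF False x(2) elim, of \<theta>] x
      by (simp add: differential_def KP2_def algebra_simps)
  qed (simp add: differential_def KP2_def)
qed

lemma nn_integral_differential_difference_sq_le_pairings:
  assumes x: "x \<in> borel_measurable M" "L2norm M x = ennreal n" "0 < n"
    and ab: "a x \<in> borel_measurable M" "b x \<in> borel_measurable M"
      "AE s in M. \<bar>x s\<bar> = \<bar>a x s\<bar> powr (1 - 1/2) * \<bar>b x s\<bar> powr (1/2)"
    and ab': "a' x \<in> borel_measurable M" "b' x \<in> borel_measurable M"
      "AE s in M. \<bar>x s\<bar> = \<bar>a' x s\<bar> powr (1 - 1/2) * \<bar>b' x s\<bar> powr (1/2)"
  shows "(\<integral>\<^sup>+ s. ennreal ((differential a' b' x s - (1-\<theta>) * differential a b x s - \<theta> * KP2 M x s)\<^sup>2) \<partial>M)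
    \<le> ennreal (16 * n powr \<theta>) * (\<integral>\<^sup>+ s. ennreal (\<bar>a x s\<bar> powr (1-\<theta>) * \<bar>b' x s\<bar>) \<partial>M)
      + ennreal (16 * n powr (-\<theta>)) * (\<integral>\<^sup>+ s. ennreal (\<bar>a' x s\<bar> * (\<bar>b x s\<bar> powr (1-\<theta>) * \<bar>x s\<bar> powr (2*\<theta>))) \<partial>M)"
proof -
  define u1 where "u1 s = \<bar>a x s\<bar> powr (1-\<theta>) * \<bar>b' x s\<bar>" for s
  define u2 where "u2 s = \<bar>a' x s\<bar> * (\<bar>b x s\<bar> powr (1-\<theta>) * \<bar>x s\<bar> powr (2*\<theta>))" for s
  have "(\<lambda>s. \<bar>b x s\<bar> powr (1-\<theta>) * \<bar>x s\<bar> powr (2*\<theta>)) \<in> borel_measurable M"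
    using ab(2) x(1) by measurable
  then have u: "u1 \<in> borel_measurable M" "u2 \<in> borel_measurable M"
    unfolding u1_def u2_def using ab(1) ab'(1,2) by measurable
  have "AE s in M. ennreal ((differential a' b' x s - (1-\<theta>) * differential a b x s - \<theta> * KP2 M x s)\<^sup>2)
      \<le> ennreal (16 * n powr \<theta>) * ennreal (u1 s) + ennreal (16 * n powr (-\<theta>)) * ennreal (u2 s)"
    using AE_differential_difference_sq_le[where a=a and b=b and a'=a' and b'=b' and \<theta>=\<theta>,
        OF x(2,3) ab(3) ab'(3)]
  proof eventually_elim
    case (elim s)
    then have "ennreal ((differential a' b' x s - (1-\<theta>) * differential a b x s - \<theta> * KP2 M x s)\<^sup>2)
        \<le> ennreal (16 * n powr \<theta> * u1 s + 16 * n powr (-\<theta>) * u2 s)"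
      unfolding u1_def u2_def by (rule ennreal_leI)
    also have "\<dots> = ennreal (16 * n powr \<theta>) * ennreal (u1 s) + ennreal (16 * n powr (-\<theta>)) * ennreal (u2 s)"
      by (simp add: u1_def u2_def ennreal_plus ennreal_mult)
    finally show ?case .
  qed
  then have "(\<integral>\<^sup>+ s. ennreal ((differential a' b' x s - (1-\<theta>) * differential a b x s - \<theta> * KP2 M x s)\<^sup>2) \<partial>M)
      \<le> (\<integral>\<^sup>+ s. ennreal (16 * n powr \<theta>) * ennreal (u1 s) + ennreal (16 * n powr (-\<theta>)) * ennreal (u2 s) \<partial>M)"
    by (rule nn_integral_mono_AE)
  also have "\<dots> = ennreal (16 * n powr \<theta>) * (\<integral>\<^sup>+ s. ennreal (u1 s) \<partial>M)
      + ennreal (16 * n powr (-\<theta>)) * (\<integral>\<^sup>+ s. ennreal (u2 s) \<partial>M)"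
    using u by (simp add: nn_integral_add nn_integral_cmult)
  finally show ?thesis unfolding u1_def u2_def .
qed

lemma nn_integral_differential_difference_sq_le:
  fixes M :: "'a measure" and N :: "('a \<Rightarrow> real) \<Rightarrow> ennreal" and \<theta> :: real
    and a b a' b' :: "('a \<Rightarrow> real) \<Rightarrow> 'a \<Rightarrow> real"
  defines "N\<theta> \<equiv> calderon M \<theta> N (Linfnorm M)"
  assumes N: "koethe M N" and th: "0 < \<theta>" "\<theta> < 1"
    and x: "x \<in> kspace M (L2norm M)" "L2norm M x = ennreal n" "0 < n"
    and ab: "a x \<in> borel_measurable M" "b x \<in> borel_measurable M"
      "AE s in M. \<bar>x s\<bar> = \<bar>a x s\<bar> powr (1 - 1/2) * \<bar>b x s\<bar> powr (1/2)"
      "N (a x) \<le> ennreal A" "kdual M N (b x) \<le> ennreal A" "0 < A"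
    and ab': "a' x \<in> borel_measurable M" "b' x \<in> borel_measurable M"
      "AE s in M. \<bar>x s\<bar> = \<bar>a' x s\<bar> powr (1 - 1/2) * \<bar>b' x s\<bar> powr (1/2)"
      "N\<theta> (a' x) \<le> ennreal B" "kdual M N\<theta> (b' x) \<le> ennreal B" "0 < B"
  shows "(\<integral>\<^sup>+ s. ennreal ((differential a' b' x s - (1-\<theta>) * differential a b x s - \<theta> * KP2 M x s)\<^sup>2) \<partial>M)
    \<le> ennreal (80 * (A powr (1-\<theta>) * n powr \<theta> * B))"
proof -
  from x(1) obtain n' where xm: "x \<in> borel_measurable M" and "0 \<le> n'" "L2norm M x = ennreal n'"
    and int: "(\<integral>\<^sup>+ s. ennreal ((x s)\<^sup>2) \<partial>M) = ennreal (n'\<^sup>2)"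
    by (rule kspace_L2normE)
  with x(2,3) have int: "(\<integral>\<^sup>+ s. ennreal ((x s)\<^sup>2) \<partial>M) = ennreal (n\<^sup>2)" by simp
  have U1: "(\<integral>\<^sup>+ s. ennreal (\<bar>a x s\<bar> powr (1-\<theta>) * \<bar>b' x s\<bar>) \<partial>M) \<le> ennreal (A powr (1-\<theta>)) * ennreal B"
    using nn_integral_powr_mult_le_kdual[OF N ab(1,4,6) ab'(2), of \<theta>] ab'(5)
    unfolding N\<theta>_def by (meson order_trans mult_left_mono zero_le)
  have U2: "(\<integral>\<^sup>+ s. ennreal (\<bar>a' x s\<bar> * (\<bar>b x s\<bar> powr (1-\<theta>) * \<bar>x s\<bar> powr (2*\<theta>))) \<partial>M)
      \<le> ennreal (2 * (2 * B) * A powr (1-\<theta>) * (n\<^sup>2) powr \<theta>)"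
    using ab'(4,6) x(3) int
    by (intro nn_integral_pairing_calderon_Linfnorm_le[OF th ab(2,5,6) xm])
      (auto simp: N\<theta>_def ennreal_less_iff intro: le_less_trans)
  have "ennreal (16 * n powr \<theta>) * ennreal p + ennreal (16 * n powr (-\<theta>)) * ennreal q
      = ennreal (16 * n powr \<theta> * p + 16 * n powr (-\<theta>) * q)" if "0 \<le> p" "0 \<le> q" for p q
    using that by (simp add: ennreal_plus ennreal_mult)
  note collect = this[of "A powr (1-\<theta>) * B" "2 * (2 * B) * A powr (1-\<theta>) * (n\<^sup>2) powr \<theta>"]
  have "(n\<^sup>2) powr \<theta> = (n powr 2) powr \<theta>" using x(3) by simp
  also have "\<dots> = n powr \<theta> * n powr \<theta>" using powr_add[of n \<theta> \<theta>] by (simp add: powr_powr)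
  finally have n2: "(n\<^sup>2) powr \<theta> = n powr \<theta> * n powr \<theta>" .
  have "(\<integral>\<^sup>+ s. ennreal ((differential a' b' x s - (1-\<theta>) * differential a b x s - \<theta> * KP2 M x s)\<^sup>2) \<partial>M)
      \<le> ennreal (16 * n powr \<theta>) * (ennreal (A powr (1-\<theta>)) * ennreal B)
      + ennreal (16 * n powr (-\<theta>)) * ennreal (2 * (2 * B) * A powr (1-\<theta>) * (n\<^sup>2) powr \<theta>)"
    using nn_integral_differential_difference_sq_le_pairings[where a=a and b=b and a'=a' and b'=b'
        and \<theta>=\<theta>, OF xm x(2,3) ab(1-3) ab'(1-3)] U1 U2
    by (meson add_mono mult_left_mono order_trans zero_le)
  also have "\<dots> = ennreal (80 * (A powr (1-\<theta>) * n powr \<theta> * B))"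
    using collect ab(6) ab'(6) x(3) by (simp add: ennreal_mult n2 powr_minus field_simps)
  finally show ?thesis .
qed

lemma L2norm_differential_difference_le:
  fixes M :: "'a measure" and N :: "('a \<Rightarrow> real) \<Rightarrow> ennreal" and \<theta> :: real
    and a b a' b' :: "('a \<Rightarrow> real) \<Rightarrow> 'a \<Rightarrow> real"
  defines "N\<theta> \<equiv> calderon M \<theta> N (Linfnorm M)"
  assumes N: "koethe M N" and th: "0 < \<theta>" "\<theta> < 1"
    and x: "x \<in> kspace M (L2norm M)" "L2norm M x = ennreal n" "0 \<le> n"
    and ab: "a x \<in> borel_measurable M" "b x \<in> borel_measurable M"
      "AE s in M. \<bar>x s\<bar> = \<bar>a x s\<bar> powr (1 - 1/2) * \<bar>b x s\<bar> powr (1/2)"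
      "0 < n \<Longrightarrow> N (a x) \<le> ennreal (cA * n) \<and> kdual M N (b x) \<le> ennreal (cA * n)" "0 < cA"
    and ab': "a' x \<in> borel_measurable M" "b' x \<in> borel_measurable M"
      "AE s in M. \<bar>x s\<bar> = \<bar>a' x s\<bar> powr (1 - 1/2) * \<bar>b' x s\<bar> powr (1/2)"
      "0 < n \<Longrightarrow> N\<theta> (a' x) \<le> ennreal (cB * n) \<and> kdual M N\<theta> (b' x) \<le> ennreal (cB * n)" "0 < cB"
  shows "L2norm M (\<lambda>s. differential a' b' x s - (1 - \<theta>) * differential a b x s - \<theta> * KP2 M x s)
    \<le> ennreal (sqrt (80 * cA powr (1-\<theta>) * cB) * n)"
proof -
  let ?D = "\<lambda>s. differential a' b' x s - (1 - \<theta>) * differential a b x s - \<theta> * KP2 M x s"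
  from x(1) obtain n' where xm: "x \<in> borel_measurable M" and "L2norm M x = ennreal n'" "0 \<le> n'"
    and "(\<integral>\<^sup>+ s. ennreal ((x s)\<^sup>2) \<partial>M) = ennreal (n'\<^sup>2)"
    by (rule kspace_L2normE)
  with x(2,3) have int: "(\<integral>\<^sup>+ s. ennreal ((x s)\<^sup>2) \<partial>M) = ennreal (n\<^sup>2)" by simp
  have Dm: "?D \<in> borel_measurable M"
    unfolding differential_def KP2_def using xm ab(1,2) ab'(1,2) by measurable
  show ?thesis
  proof (cases "n = 0")
    case True
    then have "AE s in M. x s = 0"
      using int xm by (simp add: nn_integral_0_iff_AE)
    then have "(\<integral>\<^sup>+ s. ennreal ((?D s)\<^sup>2) \<partial>M) \<le> ennreal (0\<^sup>2)"
      using Dm by (auto simp: nn_integral_0_iff_AE differential_def KP2_def elim: eventually_mono)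
    with True show ?thesis by (intro L2norm_le_if_nn_integral_sq_le[OF Dm]) simp_all
  next
    case False
    with x(3) have n: "0 < n" by simp
    have "(\<integral>\<^sup>+ s. ennreal ((?D s)\<^sup>2) \<partial>M) \<le> ennreal (80 * ((cA * n) powr (1-\<theta>) * n powr \<theta> * (cB * n)))"
      using ab(4)[OF n] ab'(4)[OF n] ab(5) ab'(5) n
      by (intro nn_integral_differential_difference_sq_le[where a=a and b=b and a'=a' and b'=b',
            OF N th x(1,2) n ab(1-3) _ _ _ ab'(1-3), folded N\<theta>_def]) auto
    also have "80 * ((cA * n) powr (1-\<theta>) * n powr \<theta> * (cB * n)) = (sqrt (80 * cA powr (1-\<theta>) * cB) * n)\<^sup>2"
      using ab(5) ab'(5) n by (simp add: powr_mult power_mult_distrib power2_eq_square mult_ac flip: powr_add)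
    finally show ?thesis
      using n ab(5) ab'(5) by (intro L2norm_le_if_nn_integral_sq_le[OF Dm]) auto
  qed
qed

lemma differential_difference_bounded:
  fixes M :: "'a measure" and N :: "('a \<Rightarrow> real) \<Rightarrow> ennreal" and \<theta> :: real
    and a b a' b' :: "('a \<Rightarrow> real) \<Rightarrow> 'a \<Rightarrow> real"
  defines "N\<theta> \<equiv> calderon M \<theta> N (Linfnorm M)"
  assumes N: "koethe M N" and th: "0 < \<theta>" "\<theta> < 1"
    and eq: "kspace M (calderon M (1/2) N (kdual M N)) = kspace M (L2norm M)"
    and eq\<theta>: "kspace M (calderon M (1/2) N\<theta> (kdual M N\<theta>)) = kspace M (L2norm M)"
    and opt: "almost_opt_fact M (1/2) N (kdual M N) C a b"
    and opt': "almost_opt_fact M (1/2) N\<theta> (kdual M N\<theta>) C' a' b'"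
  shows "\<exists>K. \<forall>x\<in>kspace M (L2norm M).
    L2norm M (\<lambda>s. differential a' b' x s - (1 - \<theta>) * differential a b x s - \<theta> * KP2 M x s)
      \<le> ennreal K * L2norm M x"
proof -
  obtain cA where cA: "0 < cA" "\<And>x n. x \<in> kspace M (L2norm M) \<Longrightarrow> L2norm M x = ennreal n \<Longrightarrow> 0 < n \<Longrightarrow>
      N (a x) \<le> ennreal (cA * n) \<and> kdual M N (b x) \<le> ennreal (cA * n)"
    using almost_opt_fact_le_L2norm[OF opt eq] by blast
  obtain cB where cB: "0 < cB" "\<And>x n. x \<in> kspace M (L2norm M) \<Longrightarrow> L2norm M x = ennreal n \<Longrightarrow> 0 < n \<Longrightarrow>
      N\<theta> (a' x) \<le> ennreal (cB * n) \<and> kdual M N\<theta> (b' x) \<le> ennreal (cB * n)"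
    using almost_opt_fact_le_L2norm[OF opt' eq\<theta>] by blast
  define K where "K = sqrt (80 * cA powr (1-\<theta>) * cB)"
  have "L2norm M (\<lambda>s. differential a' b' x s - (1 - \<theta>) * differential a b x s - \<theta> * KP2 M x s)
      \<le> ennreal K * L2norm M x" if x: "x \<in> kspace M (L2norm M)" for x
  proof -
    from x obtain n where n: "0 \<le> n" "L2norm M x = ennreal n" by (rule kspace_L2normE)
    have "a x \<in> borel_measurable M \<and> b x \<in> borel_measurable M \<and>
        (AE s in M. \<bar>x s\<bar> = \<bar>a x s\<bar> powr (1 - 1/2) * \<bar>b x s\<bar> powr (1/2)) \<and>
        a' x \<in> borel_measurable M \<and> b' x \<in> borel_measurable M \<and>
        (AE s in M. \<bar>x s\<bar> = \<bar>a' x s\<bar> powr (1 - 1/2) * \<bar>b' x s\<bar> powr (1/2))"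
      using opt opt' x eq eq\<theta> unfolding almost_opt_fact_def by blast
    then have "L2norm M (\<lambda>s. differential a' b' x s - (1 - \<theta>) * differential a b x s - \<theta> * KP2 M x s)
        \<le> ennreal (K * n)"
      using cA cB x n unfolding K_def N\<theta>_def
      by (intro L2norm_differential_difference_le[OF N th x n(2,1)]) auto
    then show ?thesis using n cA(1) cB(1) by (simp add: K_def ennreal_mult)
  qed
  then show ?thesis by blast
qed

theorem mainTheorem9:
  fixes M :: "'a measure" and N :: "('a \<Rightarrow> real) \<Rightarrow> ennreal" and \<theta> :: real
  assumes "sigma_finite_measure M"
    and "koethe M N"
    and "kspace M (calderon M (1/2) N (kdual M N)) = kspace M (L2norm M)"
    and "0 < \<theta>" and "\<theta> < 1"
  shows "kspace M (calderon M (1/2) (calderon M \<theta> N (Linfnorm M))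
                     (kdual M (calderon M \<theta> N (Linfnorm M)))) = kspace M (L2norm M)
     \<and> (\<forall>C a b C' a' b'.
          almost_opt_fact M (1/2) N (kdual M N) C a b \<longrightarrow>
          almost_opt_fact M (1/2) (calderon M \<theta> N (Linfnorm M))
                                  (kdual M (calderon M \<theta> N (Linfnorm M))) C' a' b' \<longrightarrow>
          (\<exists>K::real. \<forall>x\<in>kspace M (L2norm M).
              L2norm M (\<lambda>s. differential a' b' x s - (1 - \<theta>) * differential a b x s
                             - \<theta> * KP2 M x s)
              \<le> ennreal K * L2norm M x))"
proof -
  have eq\<theta>: "kspace M (calderon M (1/2) (calderon M \<theta> N (Linfnorm M))
      (kdual M (calderon M \<theta> N (Linfnorm M)))) = kspace M (L2norm M)"
    by (rule kspace_calderon_interpolated_kdual_eq_L2[OF assms(3-5)])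
  with differential_difference_bounded[OF assms(2,4,5,3) eq\<theta>] show ?thesis by blast
qed

end
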